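(* Let $p\in(1,\infty)$ and $q\in[1,\infty]$. For every $k\in\mathbb N$ the unit vector basis of $\ell_q^k$ belongs to $\{X_p^{q,\omega}\}_k$.
   Context: Define $X^{q,0}_p=\mathbb R$ and inductively $X^{q,k}_p=\mathbb R\oplus_q\ell_p(X^{q,k-1}_p)$ (the $\ell_q$-direct sum of $\mathbb R$ with the $\ell_p$-sum of countably many copies of $X^{q,k-1}_p$), and $X^{q,\omega}_p=(\bigoplus_{k=0}^\infty X^{q,k}_p)_{\ell_p}$. For a Banach space $X$, $\{X\}_k$ is the set of norms $E$ on $\mathbb R^k$ for which the unit vector basis $(e_j)$ is normalized and monotone and such that: for every $\varepsilon>0$, for every closed finite-codimensional $X_1$ there is $x_1\in S_{X_1}$, ..., for every closed finite-codimensional $X_k$ there is $x_k\in S_{X_k}$, with $(x_j)_{j=1}^k$ $(1+\varepsilon)$-equivalent to $(e_j)_{j=1}^k$ ($C$-equivalent meaning $\frac1A\|\sum a_ix_i\|\le\|\sum a_ie_i\|\le B\|\sum a_ix_i\|$ with $AB\le C$). *)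

theory Defs
  imports "HOL-Analysis.Analysis"
begin

text \<open>An element of X^{q,k}_p is represented as a tree-indexed family of reals:
  the coordinate at the empty list is the R-summand, and the coordinates at
  lists (n # l) form the n-th copy of X^{q,k-1}_p in the l_p-sum.\<close>

definition qcomb :: "ereal \<Rightarrow> real \<Rightarrow> real \<Rightarrow> real" where
  "qcomb q a b = (if q = \<infinity> then max a b
                  else (a powr real_of_ereal q + b powr real_of_ereal q) powr (1 / real_of_ereal q))"

definition subtree :: "nat \<Rightarrow> (nat list \<Rightarrow> real) \<Rightarrow> (nat list \<Rightarrow> real)" where
  "subtree n x = (\<lambda>l. x (n # l))"

fun Xnorm :: "real \<Rightarrow> ereal \<Rightarrow> nat \<Rightarrow> (nat list \<Rightarrow> real) \<Rightarrow> real" where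
  "Xnorm p q 0 x = \<bar>x []\<bar>"
| "Xnorm p q (Suc k) x =
     qcomb q \<bar>x []\<bar> ((\<Sum>n. Xnorm p q k (subtree n x) powr p) powr (1 / p))"

fun Xmem :: "real \<Rightarrow> ereal \<Rightarrow> nat \<Rightarrow> (nat list \<Rightarrow> real) \<Rightarrow> bool" where
  "Xmem p q 0 x = (\<forall>l. l \<noteq> [] \<longrightarrow> x l = 0)"
| "Xmem p q (Suc k) x =
     ((\<forall>n. Xmem p q k (subtree n x)) \<and> summable (\<lambda>n. Xnorm p q k (subtree n x) powr p))"

type_synonym vec = "nat \<Rightarrow> nat list \<Rightarrow> real"

text \<open>X^{q,omega}_p = (sum_k X^{q,k}_p)_{l_p}; the k-th component of x is x k.\<close>
definition Xomega :: "real \<Rightarrow> ereal \<Rightarrow> vec set" where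
  "Xomega p q = {x. (\<forall>k. Xmem p q k (x k)) \<and> summable (\<lambda>k. Xnorm p q k (x k) powr p)}"

definition Xomega_norm :: "real \<Rightarrow> ereal \<Rightarrow> vec \<Rightarrow> real" where
  "Xomega_norm p q x = (\<Sum>k. Xnorm p q k (x k) powr p) powr (1 / p)"

definition vadd :: "vec \<Rightarrow> vec \<Rightarrow> vec" where
  "vadd x y = (\<lambda>k l. x k l + y k l)"

definition vscale :: "real \<Rightarrow> vec \<Rightarrow> vec" where
  "vscale c x = (\<lambda>k l. c * x k l)"

definition vzero :: vec where
  "vzero = (\<lambda>k l. 0)"

definition vsum :: "nat \<Rightarrow> (nat \<Rightarrow> vec) \<Rightarrow> vec" where
  "vsum m f = (\<lambda>k l. \<Sum>i<m. f i k l)"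

definition vdiff :: "vec \<Rightarrow> vec \<Rightarrow> vec" where
  "vdiff x y = (\<lambda>k l. x k l - y k l)"

definition lin_subspace :: "vec set \<Rightarrow> vec set \<Rightarrow> bool" where
  "lin_subspace V Y \<longleftrightarrow> Y \<subseteq> V \<and> vzero \<in> Y \<and>
     (\<forall>x\<in>Y. \<forall>y\<in>Y. vadd x y \<in> Y) \<and> (\<forall>c. \<forall>x\<in>Y. vscale c x \<in> Y)"

definition closed_in_space :: "vec set \<Rightarrow> (vec \<Rightarrow> real) \<Rightarrow> vec set \<Rightarrow> bool" where
  "closed_in_space V N Y \<longleftrightarrow>
     (\<forall>s x. (\<forall>n. s n \<in> Y) \<and> x \<in> V \<and> (\<lambda>n. N (vdiff (s n) x)) \<longlonglongrightarrow> 0 \<longrightarrow> x \<in> Y)"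

definition finite_codim :: "vec set \<Rightarrow> vec set \<Rightarrow> bool" where
  "finite_codim V Y \<longleftrightarrow> (\<exists>m f. (\<forall>i<m. f i \<in> V) \<and>
     (\<forall>v\<in>V. \<exists>y\<in>Y. \<exists>c. v = vadd y (vsum m (\<lambda>i. vscale (c i) (f i)))))"

definition closed_fincodim :: "vec set \<Rightarrow> (vec \<Rightarrow> real) \<Rightarrow> vec set \<Rightarrow> bool" where
  "closed_fincodim V N Y \<longleftrightarrow> lin_subspace V Y \<and> closed_in_space V N Y \<and> finite_codim V Y"

text \<open>Norms E on R^k are functions on nat \<Rightarrow> real depending only on the
  coordinates 0..k-1 (the paper's e_1..e_k are our e_0..e_{k-1}).\<close>

definition unit_vec :: "nat \<Rightarrow> nat \<Rightarrow> real" where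
  "unit_vec j = (\<lambda>i. if i = j then 1 else 0)"

definition is_norm_Rk :: "nat \<Rightarrow> ((nat \<Rightarrow> real) \<Rightarrow> real) \<Rightarrow> bool" where
  "is_norm_Rk k E \<longleftrightarrow>
     (\<forall>a b. (\<forall>i<k. a i = b i) \<longrightarrow> E a = E b) \<and>
     (\<forall>a. E a \<ge> 0) \<and>
     (\<forall>a. E a = 0 \<longleftrightarrow> (\<forall>i<k. a i = 0)) \<and>
     (\<forall>a b. E (\<lambda>i. a i + b i) \<le> E a + E b) \<and>
     (\<forall>c a. E (\<lambda>i. c * a i) = \<bar>c\<bar> * E a)"

definition basis_normalized_monotone :: "nat \<Rightarrow> ((nat \<Rightarrow> real) \<Rightarrow> real) \<Rightarrow> bool" where
  "basis_normalized_monotone k E \<longleftrightarrow>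
     (\<forall>j<k. E (unit_vec j) = 1) \<and>
     (\<forall>m n a. m \<le> n \<and> n \<le> k \<longrightarrow>
        E (\<lambda>i. if i < m then a i else 0) \<le> E (\<lambda>i. if i < n then a i else 0))"

definition C_equivalent :: "(vec \<Rightarrow> real) \<Rightarrow> nat \<Rightarrow> vec list \<Rightarrow> ((nat \<Rightarrow> real) \<Rightarrow> real) \<Rightarrow> real \<Rightarrow> bool" where
  "C_equivalent N k xs E C \<longleftrightarrow> (\<exists>A B. A > 0 \<and> B > 0 \<and> A * B \<le> C \<and>
     (\<forall>a. (1 / A) * N (vsum k (\<lambda>i. vscale (a i) (xs ! i))) \<le> E a \<and>
          E a \<le> B * N (vsum k (\<lambda>i. vscale (a i) (xs ! i)))))"

fun asym_game :: "vec set \<Rightarrow> (vec \<Rightarrow> real) \<Rightarrow> nat \<Rightarrow> (vec list \<Rightarrow> bool) \<Rightarrow> vec list \<Rightarrow> bool" where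
  "asym_game V N 0 P xs = P xs"
| "asym_game V N (Suc n) P xs =
     (\<forall>Y. closed_fincodim V N Y \<longrightarrow> (\<exists>x\<in>Y. N x = 1 \<and> asym_game V N n P (xs @ [x])))"

definition asym_struct :: "vec set \<Rightarrow> (vec \<Rightarrow> real) \<Rightarrow> nat \<Rightarrow> ((nat \<Rightarrow> real) \<Rightarrow> real) \<Rightarrow> bool" where
  "asym_struct V N k E \<longleftrightarrow> is_norm_Rk k E \<and> basis_normalized_monotone k E \<and>
     (\<forall>\<epsilon>>0. asym_game V N k (\<lambda>xs. C_equivalent N k xs E (1 + \<epsilon>)) [])"

definition lq_norm :: "ereal \<Rightarrow> nat \<Rightarrow> (nat \<Rightarrow> real) \<Rightarrow> real" where
  "lq_norm q k a = (if q = \<infinity> then (Max ({\<bar>a i\<bar> | i. i < k} \<union> {0}))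
                    else (\<Sum>i<k. \<bar>a i\<bar> powr real_of_ereal q) powr (1 / real_of_ereal q))"

end

theory Submission
  imports Defs
begin

text \<open>Given unit vectors c_0, ..., c_{k-1} of l_p, let x_i be the tree supported on level i + 1
  whose value at the node l is c_0(l_0) * ... * c_i(l_i). At every node the l_p-sum over the
  children of such a product tree collapses because the p-th powers of the c_t sum to 1, so
  the norm of a_0 x_0 + ... + a_{k-1} x_{k-1} is exactly the l_q-norm of a, whatever the c_t are.
  In round i of the game the vectors x_0, ..., x_{i-1} already played depend only on
  c_0, ..., c_{i-1}, and c_i is chosen so that x_i lies in the given subspace of finite
  codimension m: among the m + 1 candidates obtained for c_i a unit vector of l_p, some
  nontrivial combination lies in the subspace, and it is x_i for c_i the normalised vector
  of coefficients.\<close>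

lemma one_le_real_of_ereal: "1 \<le> q \<Longrightarrow> q \<noteq> \<infinity> \<Longrightarrow> 1 \<le> real_of_ereal q"
  by (cases q) auto

lemma powr_convex_nonneg:
  fixes u v t Q :: real
  assumes "1 \<le> Q" "0 \<le> u" "0 \<le> v" "0 \<le> t" "t \<le> 1"
  shows "(t * u + (1 - t) * v) powr Q \<le> t * u powr Q + (1 - t) * v powr Q"
proof -
  have shrink: "s powr Q * w powr Q \<le> s * w powr Q" if "0 \<le> s" "s \<le> 1" for s w :: real
    using assms(1) that powr_le_one_le[of s Q] by (cases "s = 0") (auto intro: mult_right_mono)
  consider "u = 0" | "v = 0" | "0 < u" "0 < v" using assms by linarith
  then show ?thesis
  proof cases
    case 1
    then show ?thesis using shrink[of "1 - t" v] assms by (simp add: powr_mult)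
  next
    case 2
    then show ?thesis using shrink[of t u] assms by (simp add: powr_mult)
  next
    case 3
    then show ?thesis
      using convex_onD[OF powr_convex[OF assms(1)], of "1 - t" u v] assms by (simp add: algebra_simps)
  qed
qed

section \<open>The norm of l_q^k as an iterated q-combination\<close>

lemma qcomb_nonneg: "0 \<le> a \<Longrightarrow> 0 \<le> b \<Longrightarrow> 0 \<le> qcomb q a b"
  by (simp add: qcomb_def le_max_iff_disj)

lemma qcomb_zero_left: "1 \<le> q \<Longrightarrow> 0 \<le> b \<Longrightarrow> qcomb q 0 b = b"
  using one_le_real_of_ereal[of q] by (cases "q = \<infinity>") (auto simp: qcomb_def powr_powr)

lemma qcomb_eq_0_iff:
  "1 \<le> q \<Longrightarrow> 0 \<le> a \<Longrightarrow> 0 \<le> b \<Longrightarrow> qcomb q a b = 0 \<longleftrightarrow> a = 0 \<and> b = 0"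
  using one_le_real_of_ereal[of q] by (auto simp: qcomb_def max_def add_nonneg_eq_0_iff)

lemma qcomb_mono:
  assumes "1 \<le> q" "0 \<le> a" "0 \<le> b" "a \<le> a'" "b \<le> b'"
  shows "qcomb q a b \<le> qcomb q a' b'"
  using assms one_le_real_of_ereal[of q]
  by (auto simp: qcomb_def intro!: powr_mono2 add_mono)

lemma qcomb_mult:
  assumes "1 \<le> q" "0 \<le> r" "0 \<le> a" "0 \<le> b"
  shows "qcomb q (r * a) (r * b) = r * qcomb q a b"
proof (cases "q = \<infinity>")
  case True
  then show ?thesis using assms by (simp add: qcomb_def max_mult_distrib_left)
next
  case False
  define Q where "Q = real_of_ereal q"
  have Q: "1 \<le> Q" using one_le_real_of_ereal[OF assms(1) False] by (simp add: Q_def)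
  have "((r * a) powr Q + (r * b) powr Q) powr (1 / Q)
      = (r powr Q) powr (1 / Q) * (a powr Q + b powr Q) powr (1 / Q)"
    using assms by (simp add: powr_mult distrib_left[symmetric])
  also have "(r powr Q) powr (1 / Q) = r" using Q assms by (simp add: powr_powr)
  finally show ?thesis using False by (simp add: qcomb_def Q_def)
qed

text \<open>Minkowski's inequality in the plane: with \<open>A\<close>, \<open>B\<close> the norms of the two summands,
  \<open>(a + a') / (A + B)\<close> is a convex combination of \<open>a / A\<close> and \<open>a' / B\<close>, and convexity of
  \<open>x powr Q\<close> does the rest.\<close>
lemma qcomb_add_le:
  assumes q: "1 \<le> q" and nonneg: "0 \<le> a" "0 \<le> b" "0 \<le> a'" "0 \<le> b'"
  shows "qcomb q (a + a') (b + b') \<le> qcomb q a b + qcomb q a' b'"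
proof (cases "q = \<infinity>")
  case True
  then show ?thesis using nonneg by (auto simp: qcomb_def max_def)
next
  case False
  define Q where "Q = real_of_ereal q"
  have Q: "1 \<le> Q" using one_le_real_of_ereal[OF q False] by (simp add: Q_def)
  define A where "A = qcomb q a b"
  define B where "B = qcomb q a' b'"
  have A_pow: "A powr Q = a powr Q + b powr Q" and B_pow: "B powr Q = a' powr Q + b' powr Q"
    using Q False by (simp_all add: A_def B_def qcomb_def Q_def powr_powr)
  show ?thesis
  proof (cases "A = 0 \<or> B = 0")
    case True
    then show ?thesis
      using qcomb_eq_0_iff[OF q] qcomb_zero_left[OF q] nonneg by (auto simp: A_def B_def)
  next
    case False
    then have AB: "0 < A" "0 < B" using qcomb_nonneg nonneg by (auto simp: A_def B_def less_le)
    define t where "t = A / (A + B)"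
    have t: "0 \<le> t" "t \<le> 1" "1 - t = B / (A + B)" using AB by (auto simp: t_def field_simps)
    have convex: "((x + x') / (A + B)) powr Q \<le> t * (x / A) powr Q + (1 - t) * (x' / B) powr Q"
      if "0 \<le> x" "0 \<le> x'" for x x'
    proof -
      have "(x + x') / (A + B) = t * (x / A) + (1 - t) * (x' / B)"
        using AB unfolding t(3) unfolding t_def by (simp add: add_divide_distrib)
      moreover have "0 \<le> x / A" "0 \<le> x' / B" using AB that by auto
      ultimately show ?thesis using powr_convex_nonneg[OF Q _ _ t(1,2)] by presburger
    qed
    have "((a + a') / (A + B)) powr Q + ((b + b') / (A + B)) powr Q
        \<le> t * ((a powr Q + b powr Q) / A powr Q) + (1 - t) * ((a' powr Q + b' powr Q) / B powr Q)"
      using convex[of a a'] convex[of b b'] nonneg AB by (simp add: powr_divide field_simps)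
    also have "\<dots> = 1" using AB by (simp add: A_pow[symmetric] B_pow[symmetric])
    finally have "(a + a') powr Q + (b + b') powr Q \<le> (A + B) powr Q"
      using AB nonneg by (simp add: powr_divide add_divide_distrib[symmetric] divide_le_eq)
    then have "((a + a') powr Q + (b + b') powr Q) powr (1 / Q) \<le> A + B"
      using Q AB powr_mono2[of "1 / Q" _ "(A + B) powr Q"] by (simp add: powr_powr)
    then show ?thesis using \<open>q \<noteq> \<infinity>\<close> by (simp add: qcomb_def Q_def A_def B_def)
  qed
qed

fun lq_seg :: "ereal \<Rightarrow> (nat \<Rightarrow> real) \<Rightarrow> nat \<Rightarrow> nat \<Rightarrow> real" where
  "lq_seg q a 0 s = \<bar>a s\<bar>"
| "lq_seg q a (Suc K) s = qcomb q \<bar>a s\<bar> (lq_seg q a K (Suc s))"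

lemma lq_seg_nonneg: "0 \<le> lq_seg q a K s"
  by (induction K arbitrary: s) (auto intro: qcomb_nonneg)

lemma lq_seg_eq_0_iff:
  assumes "1 \<le> q"
  shows "lq_seg q a K s = 0 \<longleftrightarrow> (\<forall>d\<in>{s..s + K}. a d = 0)"
proof (induction K arbitrary: s)
  case (Suc K)
  have "{s..s + Suc K} = insert s {Suc s..Suc s + K}" by auto
  then show ?case using Suc qcomb_eq_0_iff[OF assms] lq_seg_nonneg by simp
qed simp

lemma lq_seg_mono:
  assumes "1 \<le> q" "\<And>d. \<bar>a d\<bar> \<le> \<bar>b d\<bar>"
  shows "lq_seg q a K s \<le> lq_seg q b K s"
  by (induction K arbitrary: s) (auto simp: assms intro!: qcomb_mono lq_seg_nonneg)

lemma lq_seg_scale: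
  assumes "1 \<le> q"
  shows "lq_seg q (\<lambda>d. c * a d) K s = \<bar>c\<bar> * lq_seg q a K s"
  by (induction K arbitrary: s) (simp_all add: abs_mult qcomb_mult[OF assms] lq_seg_nonneg)

lemma lq_seg_add_le:
  assumes "1 \<le> q"
  shows "lq_seg q (\<lambda>d. a d + b d) K s \<le> lq_seg q a K s + lq_seg q b K s"
proof (induction K arbitrary: s)
  case (Suc K)
  have "lq_seg q (\<lambda>d. a d + b d) (Suc K) s
      \<le> qcomb q (\<bar>a s\<bar> + \<bar>b s\<bar>) (lq_seg q a K (Suc s) + lq_seg q b K (Suc s))"
    using Suc by (auto intro!: qcomb_mono[OF assms] lq_seg_nonneg abs_triangle_ineq)
  also have "\<dots> \<le> lq_seg q a (Suc K) s + lq_seg q b (Suc K) s"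
    by (auto intro!: qcomb_add_le[OF assms] lq_seg_nonneg)
  finally show ?case .
qed (simp add: abs_triangle_ineq)

lemma lq_seg_finite:
  assumes "1 \<le> q" "q \<noteq> \<infinity>"
  shows "lq_seg q a K s = (\<Sum>d=s..s + K. \<bar>a d\<bar> powr real_of_ereal q) powr (1 / real_of_ereal q)"
proof -
  define Q where "Q = real_of_ereal q"
  have Q: "1 \<le> Q" using one_le_real_of_ereal[OF assms] by (simp add: Q_def)
  have "lq_seg q a K s = (\<Sum>d=s..s + K. \<bar>a d\<bar> powr Q) powr (1 / Q)"
  proof (induction K arbitrary: s)
    case 0
    show ?case using Q by (simp add: powr_powr)
  next
    case (Suc K)
    have "{s..s + Suc K} = insert s {Suc s..Suc s + K}" by auto
    then show ?case
      using Suc[of "Suc s"] Q assms(2) by (simp add: qcomb_def Q_def[symmetric] powr_powr sum_nonneg)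
  qed
  then show ?thesis by (simp add: Q_def)
qed

lemma lq_seg_infinite:
  "lq_seg \<infinity> a K s = Max ((\<lambda>d. \<bar>a d\<bar>) ` {s..s + K})"
proof (induction K arbitrary: s)
  case (Suc K)
  have "{s..s + Suc K} = insert s {Suc s..Suc s + K}" by auto
  then show ?case using Suc[of "Suc s"] by (simp add: qcomb_def)
qed simp

text \<open>Coordinate \<open>i\<close> of \<open>a\<close> is placed at depth \<open>i + 1\<close>: depth \<open>0\<close> is the root, where the vectors
  built below vanish.\<close>
definition lift :: "nat \<Rightarrow> (nat \<Rightarrow> real) \<Rightarrow> nat \<Rightarrow> real" where
  "lift k a d = (if 1 \<le> d \<and> d \<le> k then a (d - 1) else 0)"

lemma lq_norm_eq_lq_seg_lift:
  assumes "1 \<le> q"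
  shows "lq_norm q k a = lq_seg q (lift k a) k 0"
proof (cases "q = \<infinity>")
  case True
  have "{0..k} = insert 0 (Suc ` {..<k})"
    by (simp add: atLeast0AtMost atMost_Suc_eq_insert_0 lessThan_Suc_atMost[symmetric] lessThan_Suc_eq_insert_0)
  then have "(\<lambda>d. \<bar>lift k a d\<bar>) ` {0..k} = {\<bar>a i\<bar> | i. i < k} \<union> {0}"
    by (auto simp: lift_def image_image)
  then show ?thesis using True by (simp add: lq_seg_infinite lq_norm_def)
next
  case False
  have "(\<Sum>d=0..k. \<bar>lift k a d\<bar> powr real_of_ereal q) = (\<Sum>i<k. \<bar>a i\<bar> powr real_of_ereal q)"
    using one_le_real_of_ereal[OF assms False]
    by (simp add: atLeast0AtMost sum.atMost_shift lift_def)
  then show ?thesis using False assms by (simp add: lq_seg_finite lq_norm_def)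
qed

lemma lq_norm_is_norm:
  assumes "1 \<le> q"
  shows "is_norm_Rk k (lq_norm q k)"
  unfolding is_norm_Rk_def lq_norm_eq_lq_seg_lift[OF assms]
proof (intro conjI allI impI)
  fix a b :: "nat \<Rightarrow> real"
  show "(\<forall>i<k. a i = b i) \<Longrightarrow> lq_seg q (lift k a) k 0 = lq_seg q (lift k b) k 0"
    by (rule arg_cong[where f = "\<lambda>a. lq_seg q a k 0"]) (auto simp: lift_def fun_eq_iff)
  show "0 \<le> lq_seg q (lift k a) k 0" by (rule lq_seg_nonneg)
  show "lq_seg q (lift k a) k 0 = 0 \<longleftrightarrow> (\<forall>i<k. a i = 0)"
    by (auto simp: lq_seg_eq_0_iff[OF assms] lift_def dest: bspec[of _ _ "Suc _"])
  have "lift k (\<lambda>i. a i + b i) = (\<lambda>d. lift k a d + lift k b d)" by (auto simp: lift_def)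
  then show "lq_seg q (lift k (\<lambda>i. a i + b i)) k 0 \<le> lq_seg q (lift k a) k 0 + lq_seg q (lift k b) k 0"
    using lq_seg_add_le[OF assms] by simp
  fix c :: real
  have "lift k (\<lambda>i. c * a i) = (\<lambda>d. c * lift k a d)" by (auto simp: lift_def)
  then show "lq_seg q (lift k (\<lambda>i. c * a i)) k 0 = \<bar>c\<bar> * lq_seg q (lift k a) k 0"
    using lq_seg_scale[OF assms] by simp
qed

lemma lq_norm_unit_vec:
  assumes "1 \<le> q" "j < k"
  shows "lq_norm q k (unit_vec j) = 1"
proof (cases "q = \<infinity>")
  case True
  have "{\<bar>unit_vec j i\<bar> | i. i < k} \<union> {0} = {0, 1}"
    using assms(2) by (auto simp: unit_vec_def intro: exI[of _ j])
  then show ?thesis using True by (simp add: lq_norm_def)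
next
  case False
  have "(\<Sum>i<k. \<bar>unit_vec j i\<bar> powr real_of_ereal q) = 1"
    using assms(2) by (subst sum.cong[OF refl, of _ _ "\<lambda>i. if i = j then 1 else 0"]) (auto simp: unit_vec_def)
  then show ?thesis using False by (simp add: lq_norm_def)
qed

lemma lq_norm_basis_normalized_monotone:
  assumes "1 \<le> q"
  shows "basis_normalized_monotone k (lq_norm q k)"
  unfolding basis_normalized_monotone_def
proof (intro conjI allI impI)
  show "lq_norm q k (unit_vec j) = 1" if "j < k" for j
    using lq_norm_unit_vec[OF assms that] .
  fix m n :: nat and a :: "nat \<Rightarrow> real"
  assume "m \<le> n \<and> n \<le> k"
  then show "lq_norm q k (\<lambda>i. if i < m then a i else 0) \<le> lq_norm q k (\<lambda>i. if i < n then a i else 0)"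
    unfolding lq_norm_eq_lq_seg_lift[OF assms] by (intro lq_seg_mono[OF assms]) (auto simp: lift_def)
qed

section \<open>Product trees\<close>

definition lp_sphere :: "real \<Rightarrow> (nat \<Rightarrow> real) \<Rightarrow> bool" where
  "lp_sphere p e \<longleftrightarrow> (\<lambda>n. \<bar>e n\<bar> powr p) sums 1"

lemma lp_sphere_unit_vec:
  assumes "0 < p"
  shows "lp_sphere p (unit_vec j)"
proof -
  have "(\<lambda>n. \<bar>unit_vec j n\<bar> powr p) = (\<lambda>n. if n = j then 1 else 0)"
    using assms by (simp add: fun_eq_iff unit_vec_def)
  then show ?thesis using sums_single[of j "\<lambda>_. 1 :: real"] by (simp add: lp_sphere_def)
qed

definition prod_tree :: "real \<Rightarrow> (nat \<Rightarrow> real) \<Rightarrow> (nat \<Rightarrow> nat \<Rightarrow> real) \<Rightarrow> nat \<Rightarrow> nat list \<Rightarrow> real" where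
  "prod_tree r a c s l = r * a (s + length l) * (\<Prod>t<length l. c (s + t) (l ! t))"

lemma prod_tree_Nil: "prod_tree r a c s [] = r * a s"
  by (simp add: prod_tree_def)

lemma subtree_prod_tree: "subtree n (prod_tree r a c s) = prod_tree (r * c s n) a c (Suc s)"
  unfolding subtree_def prod_tree_def fun_eq_iff
  by (simp only: length_Cons prod.lessThan_Suc_shift) simp

lemma Xnorm_prod_tree:
  assumes p: "0 < p" and q: "1 \<le> q" and c: "\<forall>t. lp_sphere p (c t)"
  shows "Xnorm p q K (prod_tree r a c s) = \<bar>r\<bar> * lq_seg q a K s"
proof (induction K arbitrary: r s)
  case (Suc K)
  define X where "X = \<bar>r\<bar> * lq_seg q a K (Suc s)"
  have X: "0 \<le> X" by (simp add: X_def lq_seg_nonneg)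
  have "(\<lambda>n. Xnorm p q K (subtree n (prod_tree r a c s)) powr p) = (\<lambda>n. X powr p * \<bar>c s n\<bar> powr p)"
    using Suc X by (simp add: subtree_prod_tree X_def abs_mult powr_mult mult_ac)
  moreover have "(\<lambda>n. X powr p * \<bar>c s n\<bar> powr p) sums (X powr p)"
    using sums_mult[OF c[rule_format, of s, unfolded lp_sphere_def], of "X powr p"] by simp
  ultimately have "(\<Sum>n. Xnorm p q K (subtree n (prod_tree r a c s)) powr p) powr (1 / p) = X"
    using p X by (simp add: sums_iff powr_powr)
  then show ?case
    using qcomb_mult[OF q, of "\<bar>r\<bar>" "\<bar>a s\<bar>" "lq_seg q a K (Suc s)"]
    by (simp add: prod_tree_Nil abs_mult X_def lq_seg_nonneg)
qed (simp add: prod_tree_Nil abs_mult)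

lemma Xmem_prod_tree:
  assumes p: "0 < p" and q: "1 \<le> q" and c: "\<forall>t. lp_sphere p (c t)"
    and a: "\<And>d. s + K < d \<Longrightarrow> a d = 0"
  shows "Xmem p q K (prod_tree r a c s)"
  using a
proof (induction K arbitrary: r s)
  case (Suc K)
  have "(\<lambda>n. Xnorm p q K (subtree n (prod_tree r a c s)) powr p)
      = (\<lambda>n. (\<bar>r\<bar> * lq_seg q a K (Suc s)) powr p * \<bar>c s n\<bar> powr p)"
    by (simp add: subtree_prod_tree Xnorm_prod_tree[OF p q c] abs_mult powr_mult mult_ac lq_seg_nonneg)
  moreover have "summable (\<lambda>n. \<bar>c s n\<bar> powr p)"
    using c by (auto simp: lp_sphere_def sums_iff)
  ultimately show ?case
    using Suc by (simp add: subtree_prod_tree summable_mult)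
qed (simp add: prod_tree_def)

definition single_component :: "nat \<Rightarrow> (nat list \<Rightarrow> real) \<Rightarrow> vec" where
  "single_component k T = (\<lambda>j. if j = k then T else (\<lambda>l. 0))"

lemma Xnorm_zero: "Xnorm p q j (\<lambda>l. 0) = 0"
  by (induction j) (simp_all add: subtree_def qcomb_def)

lemma Xmem_zero: "Xmem p q j (\<lambda>l. 0)"
  by (induction j) (simp_all add: subtree_def Xnorm_zero)

lemma Xnorm_nonneg: "0 \<le> Xnorm p q j x"
  by (cases j) (simp_all add: qcomb_nonneg)

lemma Xnorm_single_component_sums:
  "(\<lambda>j. Xnorm p q j (single_component k T j) powr p) sums (Xnorm p q k T powr p)"
proof -
  have "(\<lambda>j. Xnorm p q j (single_component k T j) powr p) = (\<lambda>j. if j = k then Xnorm p q k T powr p else 0)"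
    by (simp add: fun_eq_iff single_component_def Xnorm_zero)
  then show ?thesis using sums_single[of k "\<lambda>_. Xnorm p q k T powr p"] by simp
qed

lemma Xomega_norm_single_component:
  "0 < p \<Longrightarrow> Xomega_norm p q (single_component k T) = Xnorm p q k T"
  using Xnorm_single_component_sums Xnorm_nonneg
  by (simp add: Xomega_norm_def sums_iff powr_powr)

lemma single_component_in_Xomega:
  "Xmem p q k T \<Longrightarrow> single_component k T \<in> Xomega p q"
  using Xnorm_single_component_sums
  by (auto simp: Xomega_def single_component_def Xmem_zero sums_iff)

definition tree_basis :: "nat \<Rightarrow> (nat \<Rightarrow> nat \<Rightarrow> real) \<Rightarrow> nat \<Rightarrow> vec" where
  "tree_basis k c i = single_component k (prod_tree 1 (lift k (unit_vec i)) c 0)"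

lemma tree_basis_apply:
  assumes "i < k"
  shows "tree_basis k c i j l =
    (if j = k \<and> length l = Suc i then (\<Prod>t<i. c t (l ! t)) * c i (l ! i) else 0)"
  using assms by (auto simp: tree_basis_def single_component_def prod_tree_def lift_def unit_vec_def)

lemma tree_basis_fun_upd_later:
  assumes "i < k" "i < j"
  shows "tree_basis k (c(j := e)) i = tree_basis k c i"
  using assms by (simp add: fun_eq_iff tree_basis_apply)

lemma tree_basis_in_Xomega:
  assumes "0 < p" "1 \<le> q" "\<forall>t. lp_sphere p (c t)"
  shows "tree_basis k c i \<in> Xomega p q"
  unfolding tree_basis_def
  by (intro single_component_in_Xomega Xmem_prod_tree[OF assms]) (simp add: lift_def)

lemma vsum_tree_basis:
  "vsum k (\<lambda>i. vscale (a i) (tree_basis k c i)) = single_component k (prod_tree 1 (lift k a) c 0)"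
proof -
  have "(\<Sum>i<k. a i * lift k (unit_vec i) d) = lift k a d" for d
    by (auto simp: lift_def unit_vec_def if_distrib[of "\<lambda>x. a _ * x"] cong: if_cong)
  then show ?thesis
    by (simp add: fun_eq_iff vsum_def vscale_def tree_basis_def single_component_def prod_tree_def
        flip: sum_distrib_right mult.assoc)
qed

lemma Xomega_norm_vsum_tree_basis:
  assumes "0 < p" "1 \<le> q" "\<forall>t. lp_sphere p (c t)"
  shows "Xomega_norm p q (vsum k (\<lambda>i. vscale (a i) (tree_basis k c i))) = lq_norm q k a"
  by (simp add: vsum_tree_basis Xomega_norm_single_component Xnorm_prod_tree
      lq_norm_eq_lq_seg_lift assms)

lemma Xomega_norm_tree_basis:
  assumes "0 < p" "1 \<le> q" "\<forall>t. lp_sphere p (c t)" "i < k"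
  shows "Xomega_norm p q (tree_basis k c i) = 1"
proof -
  have "tree_basis k c i = vsum k (\<lambda>i'. vscale (unit_vec i i') (tree_basis k c i'))"
    unfolding vsum_tree_basis by (simp add: tree_basis_def)
  then show ?thesis
    using Xomega_norm_vsum_tree_basis[OF assms(1-3)] lq_norm_unit_vec[OF assms(2,4)] by simp
qed

lemma tree_basis_level_combination:
  assumes "i < k"
  shows "(\<lambda>j l. \<Sum>n\<in>J. d n * tree_basis k (c(i := e n)) i j l)
    = tree_basis k (c(i := \<lambda>m. \<Sum>n\<in>J. d n * e n m)) i"
proof (intro ext)
  fix j l
  have "(\<Prod>t<i. (c(i := f)) t (l ! t)) = (\<Prod>t<i. c t (l ! t))" for f
    by (rule prod.cong) auto
  then show "(\<Sum>n\<in>J. d n * tree_basis k (c(i := e n)) i j l)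
      = tree_basis k (c(i := \<lambda>m. \<Sum>n\<in>J. d n * e n m)) i j l"
    using assms
    by (cases "j = k \<and> length l = Suc i") (auto simp: tree_basis_apply sum_distrib_left sum_distrib_right mult_ac)
qed

section \<open>Subspaces of finite codimension\<close>

text \<open>Gaussian elimination: pick \<open>j0\<close> with \<open>c j0 m \<noteq> 0\<close>, use it to eliminate the \<open>m\<close>-th
  coordinate of the other rows, solve the smaller system on \<open>J - {j0}\<close>, and choose \<open>d j0\<close>
  to cancel the \<open>m\<close>-th coordinate.\<close>
lemma exists_nontrivial_linear_relation:
  fixes c :: "nat \<Rightarrow> nat \<Rightarrow> real"
  assumes "finite J" "m < card J"
  shows "\<exists>d. (\<exists>j\<in>J. d j \<noteq> 0) \<and> (\<forall>i<m. (\<Sum>j\<in>J. d j * c j i) = 0)"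
  using assms
proof (induction m arbitrary: J c)
  case 0
  then show ?case by (intro exI[of _ "\<lambda>_. 1"]) (auto simp: card_gt_0_iff)
next
  case (Suc m)
  show ?case
  proof (cases "\<forall>j\<in>J. c j m = 0")
    case True
    then show ?thesis using Suc.IH[of J c] Suc.prems by (auto simp: less_Suc_eq)
  next
    case False
    then obtain j0 where j0: "j0 \<in> J" "c j0 m \<noteq> 0" by auto
    define J' where "J' = J - {j0}"
    define c' where "c' j i = c j i - (c j m / c j0 m) * c j0 i" for j i
    have "finite J'" "m < card J'" using Suc.prems j0 by (auto simp: J'_def)
    then obtain d' where d': "\<exists>j\<in>J'. d' j \<noteq> 0" "\<forall>i<m. (\<Sum>j\<in>J'. d' j * c' j i) = 0"
      using Suc.IH by blast
    define d where "d j = (if j = j0 then - (\<Sum>j\<in>J'. d' j * c j m) / c j0 m else d' j)" for j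
    have sum_J: "(\<Sum>j\<in>J. d j * c j i) = d j0 * c j0 i + (\<Sum>j\<in>J'. d' j * c j i)" for i
    proof -
      have "(\<Sum>j\<in>J'. d j * c j i) = (\<Sum>j\<in>J'. d' j * c j i)"
        by (rule sum.cong) (auto simp: d_def J'_def)
      then show ?thesis using Suc.prems(1) j0 by (simp add: J'_def sum.remove)
    qed
    have "(\<Sum>j\<in>J. d j * c j i) = 0" if "i < Suc m" for i
    proof (cases "i = m")
      case True
      then show ?thesis using sum_J[of m] j0 by (simp add: d_def)
    next
      case False
      have "(\<Sum>j\<in>J'. d' j * c' j i)
          = (\<Sum>j\<in>J'. d' j * c j i) - (\<Sum>j\<in>J'. d' j * c j m) / c j0 m * c j0 i"
        by (simp add: c'_def algebra_simps sum_subtractf sum_distrib_left sum_distrib_right sum_divide_distrib)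
      then show ?thesis using d'(2) sum_J[of i] that False by (simp add: d_def)
    qed
    moreover have "\<exists>j\<in>J. d j \<noteq> 0" using d'(1) by (auto simp: d_def J'_def)
    ultimately show ?thesis by blast
  qed
qed

lemma lin_subspace_closed:
  assumes "lin_subspace V Y"
  shows lin_subspace_vzero: "vzero \<in> Y"
    and lin_subspace_vadd: "x \<in> Y \<Longrightarrow> y \<in> Y \<Longrightarrow> vadd x y \<in> Y"
    and lin_subspace_vscale: "x \<in> Y \<Longrightarrow> vscale c x \<in> Y"
  using assms by (simp_all add: lin_subspace_def)

lemma lin_subspace_sum_mem:
  assumes "lin_subspace V Y" "finite J" "\<And>j. j \<in> J \<Longrightarrow> y j \<in> Y"
  shows "(\<lambda>k l. \<Sum>j\<in>J. d j * y j k l) \<in> Y"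
  using assms(2,3)
proof (induction J rule: finite_induct)
  case empty
  then show ?case using lin_subspace_vzero[OF assms(1)] by (simp add: vzero_def)
next
  case (insert x F)
  have "(\<lambda>k l. \<Sum>j\<in>insert x F. d j * y j k l) = vadd (vscale (d x) (y x)) (\<lambda>k l. \<Sum>j\<in>F. d j * y j k l)"
    using insert.hyps by (simp add: vadd_def vscale_def)
  also have "\<dots> \<in> Y"
    using insert by (intro lin_subspace_vadd[OF assms(1)] lin_subspace_vscale[OF assms(1)]) auto
  finally show ?case .
qed

lemma finite_codim_nontrivial_combination:
  fixes v :: "nat \<Rightarrow> vec"
  assumes Y: "lin_subspace V Y" "finite_codim V Y" and v: "\<And>n. v n \<in> V"
  obtains M d where "\<exists>n\<le>M. d n \<noteq> 0" "(\<lambda>k l. \<Sum>n\<le>M. d n * v n k l) \<in> Y"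
proof -
  obtain m f where "\<forall>w\<in>V. \<exists>y\<in>Y. \<exists>a. w = vadd y (vsum m (\<lambda>i. vscale (a i) (f i)))"
    using Y(2) by (auto simp: finite_codim_def)
  then have "\<forall>n. \<exists>y a. y \<in> Y \<and> v n = vadd y (vsum m (\<lambda>i. vscale (a i) (f i)))"
    using v by blast
  then obtain y a where y: "\<And>n. y n \<in> Y"
    and v_eq: "\<And>n. v n = vadd (y n) (vsum m (\<lambda>i. vscale (a n i) (f i)))"
    by metis
  obtain d where d: "\<exists>n\<in>{..m}. d n \<noteq> 0" "\<forall>i<m. (\<Sum>n\<le>m. d n * a n i) = 0"
    using exists_nontrivial_linear_relation[of "{..m}" m a] by auto
  have "(\<lambda>k l. \<Sum>n\<le>m. d n * v n k l) = (\<lambda>k l. \<Sum>n\<le>m. d n * y n k l)"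
  proof (intro ext)
    fix k l
    have "(\<Sum>n\<le>m. d n * (\<Sum>i<m. a n i * f i k l)) = (\<Sum>i<m. (\<Sum>n\<le>m. d n * a n i) * f i k l)"
      by (simp add: sum_distrib_left sum_distrib_right mult_ac sum.swap[of _ "{..m}"])
    also have "\<dots> = 0" using d(2) by simp
    finally show "(\<Sum>n\<le>m. d n * v n k l) = (\<Sum>n\<le>m. d n * y n k l)"
      by (simp add: v_eq vadd_def vsum_def vscale_def distrib_left sum.distrib)
  qed
  moreover have "(\<lambda>k l. \<Sum>n\<le>m. d n * y n k l) \<in> Y"
    using lin_subspace_sum_mem[OF Y(1)] y by blast
  moreover have "\<exists>n\<le>m. d n \<noteq> 0" using d(1) by auto
  ultimately show ?thesis using that[of m d] by simp
qed

lemma lp_sphere_rescale: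
  assumes "0 < p" "summable (\<lambda>n. \<bar>e n\<bar> powr p)" "e j \<noteq> 0"
  obtains r where "lp_sphere p (\<lambda>n. r * e n)"
proof -
  define S where "S = (\<Sum>n. \<bar>e n\<bar> powr p)"
  have S: "0 < S" unfolding S_def using assms by (intro suminf_pos2[of _ j]) auto
  have "(S powr (-1 / p)) powr p = inverse S"
    using assms(1) S by (subst powr_powr) (simp add: powr_minus)
  then have "(\<lambda>n. \<bar>S powr (-1 / p) * e n\<bar> powr p) = (\<lambda>n. inverse S * \<bar>e n\<bar> powr p)"
    using S by (simp add: fun_eq_iff abs_mult powr_mult)
  moreover have "(\<lambda>n. inverse S * \<bar>e n\<bar> powr p) sums 1"
    using sums_mult[OF summable_sums[OF assms(2)], of "inverse S"] S by (simp add: S_def)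
  ultimately show ?thesis using that[of "S powr (-1 / p)"] by (simp add: lp_sphere_def)
qed

lemma tree_basis_level_choice:
  assumes p: "0 < p" and q: "1 \<le> q" and c: "\<forall>t. lp_sphere p (c t)" and i: "i < k"
    and Y: "closed_fincodim (Xomega p q) (Xomega_norm p q) Y"
  obtains e where "lp_sphere p e" "tree_basis k (c(i := e)) i \<in> Y"
proof -
  have lin: "lin_subspace (Xomega p q) Y" and codim: "finite_codim (Xomega p q) Y"
    using Y by (simp_all add: closed_fincodim_def)
  have "tree_basis k (c(i := unit_vec n)) i \<in> Xomega p q" for n
    using c lp_sphere_unit_vec[OF p] by (intro tree_basis_in_Xomega[OF p q]) auto
  then obtain M d where d: "\<exists>n\<le>M. d n \<noteq> 0"
    and comb: "(\<lambda>j l. \<Sum>n\<le>M. d n * tree_basis k (c(i := unit_vec n)) i j l) \<in> Y"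
    by (rule finite_codim_nontrivial_combination[OF lin codim])
  define e where "e m = (\<Sum>n\<le>M. d n * unit_vec n m)" for m
  have e_eq: "e m = (if m \<le> M then d m else 0)" for m
    by (simp add: e_def unit_vec_def if_distrib[of "\<lambda>x. d _ * x"] cong: if_cong)
  have eY: "tree_basis k (c(i := e)) i \<in> Y"
    using comb unfolding tree_basis_level_combination[OF i] e_def .
  obtain j where "j \<le> M" "d j \<noteq> 0" using d by blast
  then have "e j \<noteq> 0" by (simp add: e_eq)
  moreover have "summable (\<lambda>m. \<bar>e m\<bar> powr p)"
    by (rule summable_finite[of "{..M}"]) (auto simp: e_eq)
  ultimately obtain r where r: "lp_sphere p (\<lambda>m. r * e m)"
    using lp_sphere_rescale[OF p] by blast
  have "tree_basis k (c(i := \<lambda>m. r * e m)) i = vscale r (tree_basis k (c(i := e)) i)"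
    using tree_basis_level_combination[OF i, where J = "{0}" and d = "\<lambda>_. r" and e = "\<lambda>_. e"]
    by (simp add: vscale_def)
  then have "tree_basis k (c(i := \<lambda>m. r * e m)) i \<in> Y"
    using lin_subspace_vscale[OF lin eY] by simp
  with r show ?thesis using that by blast
qed

section \<open>The asymptotic game\<close>

lemma C_equivalent_tree_basis:
  assumes "0 < p" "1 \<le> q" "\<forall>t. lp_sphere p (c t)" "1 \<le> C"
  shows "C_equivalent (Xomega_norm p q) k (map (tree_basis k c) [0..<k]) (lq_norm q k) C"
proof -
  have "vsum k (\<lambda>i. vscale (a i) (map (tree_basis k c) [0..<k] ! i))
      = vsum k (\<lambda>i. vscale (a i) (tree_basis k c i))" for a
    by (simp add: vsum_def)
  then show ?thesis
    using assms(4) unfolding C_equivalent_def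
    by (intro exI[of _ 1]) (simp add: Xomega_norm_vsum_tree_basis[OF assms(1-3)])
qed

text \<open>Round \<open>j\<close> of the game fixes the level-\<open>j\<close> coefficients of \<open>c\<close>; the vectors
  already chosen only involve the levels below \<open>j\<close>.\<close>
lemma asym_game_tree_basis:
  assumes p: "0 < p" and q: "1 \<le> q" and C: "1 \<le> C"
  shows "\<forall>t. lp_sphere p (c t) \<Longrightarrow> j + n = k \<Longrightarrow>
    asym_game (Xomega p q) (Xomega_norm p q) n
      (\<lambda>xs. C_equivalent (Xomega_norm p q) k xs (lq_norm q k) C) (map (tree_basis k c) [0..<j])"
proof (induction n arbitrary: c j)
  case 0
  then show ?case using C_equivalent_tree_basis[OF p q _ C] by simp
next
  case (Suc n)
  have j: "j < k" using Suc.prems(2) by simp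
  show ?case
    unfolding asym_game.simps
  proof (intro allI impI)
    fix Y assume "closed_fincodim (Xomega p q) (Xomega_norm p q) Y"
    then obtain e where e: "lp_sphere p e" "tree_basis k (c(j := e)) j \<in> Y"
      using tree_basis_level_choice[OF p q Suc.prems(1) j] by blast
    have c': "\<forall>t. lp_sphere p ((c(j := e)) t)" using Suc.prems(1) e(1) by simp
    have "map (tree_basis k (c(j := e))) [0..<Suc j]
        = map (tree_basis k c) [0..<j] @ [tree_basis k (c(j := e)) j]"
      using j tree_basis_fun_upd_later[of _ k j c e] by simp
    moreover have "Suc j + n = k" using Suc.prems(2) by simp
    ultimately have "asym_game (Xomega p q) (Xomega_norm p q) n
        (\<lambda>xs. C_equivalent (Xomega_norm p q) k xs (lq_norm q k) C)
        (map (tree_basis k c) [0..<j] @ [tree_basis k (c(j := e)) j])"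
      using Suc.IH[OF c'] by metis
    moreover have "Xomega_norm p q (tree_basis k (c(j := e)) j) = 1"
      using Xomega_norm_tree_basis[OF p q c' j] .
    ultimately show "\<exists>x\<in>Y. Xomega_norm p q x = 1 \<and> asym_game (Xomega p q) (Xomega_norm p q) n
        (\<lambda>xs. C_equivalent (Xomega_norm p q) k xs (lq_norm q k) C) (map (tree_basis k c) [0..<j] @ [x])"
      using e(2) by blast
  qed
qed

theorem corollary5p6:
  fixes p :: real and q :: ereal and k :: nat
  assumes "1 < p" and "1 \<le> q"
  shows "asym_struct (Xomega p q) (Xomega_norm p q) k (lq_norm q k)"
proof -
  have p: "0 < p" using assms(1) by simp
  have "asym_game (Xomega p q) (Xomega_norm p q) k
      (\<lambda>xs. C_equivalent (Xomega_norm p q) k xs (lq_norm q k) (1 + \<epsilon>)) []" if "0 < \<epsilon>" for \<epsilon>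
    using asym_game_tree_basis[OF p assms(2), of "1 + \<epsilon>" "\<lambda>_. unit_vec 0" 0 k]
      lp_sphere_unit_vec[OF p] that by simp
  then show ?thesis
    unfolding asym_struct_def
    using lq_norm_is_norm[OF assms(2)] lq_norm_basis_normalized_monotone[OF assms(2)] by blast
qed

end
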